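(* Let $I,S\ge 0$ and $j\ge 2$ be integers with $I>S$, $I+S$ odd and $j=\frac{I-S-1}{2}$, and consider the pairing process described in the context. For $1\le h\le I$, let $N_\dagger(I,S,h)$ be the number of distinct sets of bb-pairings that arise as the set of bb-pairings of a possible wiring in which $b_h$ is left unpaired. Then: $N_\dagger(I,S,I)=\frac{1}{j!}\prod_{k=0}^{j-1}\binom{I-1-2k}{2}$; $N_\dagger(I,S,I-1)=\frac{1}{(j-1)!}(I-2)\prod_{k=0}^{j-2}\binom{I-3-2k}{2}$; for $S+1\le h\le I-2$: $N_\dagger(I,S,h)=0$ if $j<I-h$, $N_\dagger(I,S,h)=\frac{1}{(j-I+h)!}\prod_{t=1}^{I-h}(h-t)$ if $j=I-h$, and $N_\dagger(I,S,h)=\frac{1}{(j-I+h)!}\prod_{t=1}^{I-h}(h-t)\prod_{t=1}^{j-I+h}\binom{2h-I-1-2(t-1)}{2}$ if $j>I-h$; and $N_\dagger(I,S,h)=0$ for $h\le S$.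
   Context: Pairing process: there are $I$ infected devices $b_1,\dots,b_I$ and $S$ clean devices $w_1,\dots,w_S$. For $t=1,\dots,I$ in this order: if $b_t$ is not yet paired and at least one device other than $b_t$ is not yet paired, then $b_t$ chooses one of the currently unpaired devices other than itself uniformly at random, independently of previous choices, and becomes paired with it; otherwise $b_t$ does nothing. Each device belongs to at most one pair. The wiring is the final set of pairs; a bb-pairing is a pair consisting of two infected devices; a wiring is possible if it occurs with positive probability. Under the hypotheses, every possible wiring with exactly $j$ bb-pairings leaves exactly one infected device unpaired. *)

theory Defs
  imports Complex_Main
begin

text \<open>Devices: infected device b_i is Inl i (1 <= i <= I), clean device w_k is Inr k (1 <= k <= S).
A pair is a two-element set of devices; a wiring is a set of pairs.\<close>

type_synonym device = "nat + nat"

definition devices :: "nat \<Rightarrow> nat \<Rightarrow> device set" where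
  "devices I S = Inl ` {1..I} \<union> Inr ` {1..S}"

definition unpaired :: "nat \<Rightarrow> nat \<Rightarrow> device set set \<Rightarrow> device set" where
  "unpaired I S M = devices I S - \<Union>M"

text \<open>Set of partial wirings reachable with positive probability after the first t steps
(each uniform choice among finitely many options has positive probability, so the
positive-probability outcomes are exactly those produced by some sequence of admissible choices).\<close>
primrec reachable :: "nat \<Rightarrow> nat \<Rightarrow> nat \<Rightarrow> device set set set" where
  "reachable I S 0 = {{}}"
| "reachable I S (Suc t) =
     {M'. \<exists>M \<in> reachable I S t.
        (if Inl (Suc t) \<in> unpaired I S M \<and> unpaired I S M - {Inl (Suc t)} \<noteq> {}
         then (\<exists>d \<in> unpaired I S M - {Inl (Suc t)}. M' = insert {Inl (Suc t), d} M)
         else M' = M)}"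

definition possible_wirings :: "nat \<Rightarrow> nat \<Rightarrow> device set set set" where
  "possible_wirings I S = reachable I S I"

definition bb_pairings :: "device set set \<Rightarrow> device set set" where
  "bb_pairings M = {p \<in> M. p \<subseteq> range Inl}"

definition N_dagger :: "nat \<Rightarrow> nat \<Rightarrow> nat \<Rightarrow> nat" where
  "N_dagger I S h = card {bb_pairings M | M. M \<in> possible_wirings I S \<and> Inl h \<notin> \<Union>M}"

end

theory Submission
  imports Defs "HOL-Library.FuncSet"
begin

text \<open>If \<open>b\<^sub>h\<close> stays unpaired, the wiring is a perfect matching of the other devices in which
  every pair was chosen by an infected \<open>b\<^sub>a\<close> with \<open>a < h\<close> whose infected partner, if any,
  comes later; conversely, every such ordered wiring is produced by the process, each \<open>b\<^sub>a\<close>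
  picking its partner in turn. Hence the bb-pairings of these wirings are exactly the matchings
  with \<open>j\<close> pairs of the infected devices other than \<open>b\<^sub>h\<close> that cover \<open>b\<^bsub>h+1\<^esub>, \<dots>, b\<^sub>I\<close> and
  pair each of them with one of \<open>b\<^sub>1, \<dots>, b\<^bsub>h-1\<^esub>\<close>; the \<open>S\<close> clean devices are then matched
  with the \<open>S\<close> early devices left over. Such matchings are counted by choosing the distinct
  early partners of the \<open>I - h\<close> late devices and then a matching of \<open>j - (I - h)\<close> pairs among
  the remaining early devices.\<close>

section \<open>Matchings\<close>

definition doubletons :: "'a set \<Rightarrow> 'a set set" where
  "doubletons L = {p. p \<subseteq> L \<and> card p = 2}"

definition matchings :: "'a set \<Rightarrow> nat \<Rightarrow> 'a set set set" where
  "matchings L k = {B. B \<subseteq> doubletons L \<and> pairwise disjnt B \<and> card B = k}"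

lemma finite_doubletons: "finite L \<Longrightarrow> finite (doubletons L)"
  unfolding doubletons_def by (rule finite_subset[of _ "Pow L"]) auto

lemma card_doubletons: "finite L \<Longrightarrow> card (doubletons L) = card L choose 2"
  unfolding doubletons_def by (rule n_subsets)

lemma finite_matchings: "finite L \<Longrightarrow> finite (matchings L k)"
  unfolding matchings_def
  by (rule finite_subset[of _ "Pow (doubletons L)"]) (auto simp: finite_doubletons)

lemma finite_matching: "finite L \<Longrightarrow> B \<in> matchings L k \<Longrightarrow> finite B"
  unfolding matchings_def using finite_doubletons finite_subset by blast

lemma matchings_0: "finite L \<Longrightarrow> matchings L 0 = {{}}"
  unfolding matchings_def using finite_doubletons finite_subset by fastforce

lemma card_Union_matching:
  assumes "finite L" "B \<in> matchings L k"
  shows "card (\<Union>B) = 2 * k"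
proof -
  have "card (\<Union>B) = sum card B"
    using assms by (intro card_Union_disjoint)
      (auto simp: matchings_def doubletons_def intro: finite_subset)
  also have "\<dots> = 2 * k"
    using assms(2) by (simp add: matchings_def doubletons_def subset_iff)
  finally show ?thesis .
qed

lemma matchings_remove:
  assumes "B \<in> matchings L (Suc k)" "p \<in> B" "finite L"
  shows "B - {p} \<in> matchings (L - p) k"
proof -
  have B: "B \<subseteq> doubletons L" "pairwise disjnt B" "card B = Suc k"
    using assms(1) by (auto simp: matchings_def)
  have "disjnt p q" if "q \<in> B - {p}" for q
    using B(2) assms(2) that unfolding pairwise_def by auto
  then have "B - {p} \<subseteq> doubletons (L - p)"
    using B(1) by (auto simp: doubletons_def disjnt_def)
  moreover have "pairwise disjnt (B - {p})"
    using B(2) by (rule pairwise_subset) auto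
  moreover have "card (B - {p}) = k"
    using B(3) assms(2) finite_matching[OF assms(3,1)] by simp
  ultimately show ?thesis by (simp add: matchings_def)
qed

lemma matchings_insert:
  assumes "B \<in> matchings (L - p) k" "p \<in> doubletons L" "finite L"
  shows "insert p B \<in> matchings L (Suc k)" and "p \<notin> B"
proof -
  have B: "B \<subseteq> doubletons (L - p)" "pairwise disjnt B" "card B = k"
    using assms(1) by (auto simp: matchings_def)
  have "p \<noteq> {}" using assms(2) by (auto simp: doubletons_def)
  then show "p \<notin> B" using B(1) by (auto simp: doubletons_def)
  have "insert p B \<subseteq> doubletons L"
    using B(1) assms(2) by (auto simp: doubletons_def)
  moreover have "pairwise disjnt (insert p B)"
    using B(1,2) unfolding pairwise_insert by (auto simp: doubletons_def disjnt_def)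
  moreover have "card (insert p B) = Suc k"
    using B(3) \<open>p \<notin> B\<close> finite_matching[of "L - p"] assms by simp
  ultimately show "insert p B \<in> matchings L (Suc k)" by (simp add: matchings_def)
qed

lemma matchings_Suc_bij:
  assumes "finite L"
  shows "bij_betw (\<lambda>(B, p). (p, B - {p})) (SIGMA B:matchings L (Suc k). B)
           (SIGMA p:doubletons L. matchings (L - p) k)"
proof (rule bij_betwI[where g = "\<lambda>(p, B). (insert p B, p)"])
  show "(\<lambda>(B, p). (p, B - {p})) \<in>
      (SIGMA B:matchings L (Suc k). B) \<rightarrow> (SIGMA p:doubletons L. matchings (L - p) k)"
  proof
    fix x assume "x \<in> (SIGMA B:matchings L (Suc k). B)"
    then obtain B p where "x = (B, p)" "B \<in> matchings L (Suc k)" "p \<in> B" by blast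
    moreover from this have "p \<in> doubletons L" by (auto simp: matchings_def)
    ultimately show "(case x of (B, p) \<Rightarrow> (p, B - {p})) \<in>
        (SIGMA p:doubletons L. matchings (L - p) k)"
      using matchings_remove assms by simp
  qed
  show "(\<lambda>(p, B). (insert p B, p)) \<in>
      (SIGMA p:doubletons L. matchings (L - p) k) \<rightarrow> (SIGMA B:matchings L (Suc k). B)"
  proof
    fix x assume "x \<in> (SIGMA p:doubletons L. matchings (L - p) k)"
    then obtain p B where "x = (p, B)" "p \<in> doubletons L" "B \<in> matchings (L - p) k" by blast
    then show "(case x of (p, B) \<Rightarrow> (insert p B, p)) \<in> (SIGMA B:matchings L (Suc k). B)"
      using matchings_insert(1)[of B L p k] assms by simp
  qed
  show "(\<lambda>(p, B). (insert p B, p)) ((\<lambda>(B, p). (p, B - {p})) x) = x"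
    if "x \<in> (SIGMA B:matchings L (Suc k). B)" for x
    using that by auto
  show "(\<lambda>(B, p). (p, B - {p})) ((\<lambda>(p, B). (insert p B, p)) y) = y"
    if "y \<in> (SIGMA p:doubletons L. matchings (L - p) k)" for y
    using that assms matchings_insert(2) by auto
qed

lemma card_matchings:
  "finite L \<Longrightarrow>
    real (card (matchings L k)) = (1 / fact k) * (\<Prod>i<k. real ((card L - 2 * i) choose 2))"
proof (induction k arbitrary: L)
  case 0
  then show ?case by (simp add: matchings_0)
next
  case (Suc k)
  have rest: "real (card (matchings (L - p) k)) =
      (1 / fact k) * (\<Prod>i<k. real ((card L - 2 - 2 * i) choose 2))" if "p \<in> doubletons L" for p
  proof -
    have "card (L - p) = card L - 2"
      using that Suc.prems by (auto simp: doubletons_def card_Diff_subset finite_subset)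
    then show ?thesis using Suc.IH[of "L - p"] Suc.prems by (simp add: diff_diff_add)
  qed
  have "Suc k * card (matchings L (Suc k)) = (\<Sum>B\<in>matchings L (Suc k). card B)"
    by (simp add: matchings_def)
  also have "\<dots> = card (SIGMA B:matchings L (Suc k). B)"
    using Suc.prems by (intro card_SigmaI [symmetric]) (auto simp: finite_matchings finite_matching)
  also have "\<dots> = card (SIGMA p:doubletons L. matchings (L - p) k)"
    using bij_betw_same_card[OF matchings_Suc_bij[OF Suc.prems]] .
  also have "\<dots> = (\<Sum>p\<in>doubletons L. card (matchings (L - p) k))"
    using Suc.prems by (intro card_SigmaI) (auto simp: finite_matchings finite_doubletons)
  finally have "real (Suc k) * real (card (matchings L (Suc k))) =
      (\<Sum>p\<in>doubletons L. real (card (matchings (L - p) k)))"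
    by (metis of_nat_mult of_nat_sum)
  also have "\<dots> =
      real (card L choose 2) * ((1 / fact k) * (\<Prod>i<k. real ((card L - 2 - 2 * i) choose 2)))"
    using rest card_doubletons[OF Suc.prems] by simp
  also have "\<dots> = (1 / fact k) * (\<Prod>i<Suc k. real ((card L - 2 * i) choose 2))"
    by (simp add: prod.lessThan_Suc_shift diff_diff_add del: prod.lessThan_Suc)
  finally show ?case by (simp add: fact_Suc field_simps del: of_nat_Suc)
qed

lemma pairwise_disjnt_Un:
  "pairwise disjnt A \<Longrightarrow> pairwise disjnt B \<Longrightarrow> \<Union>A \<inter> \<Union>B = {} \<Longrightarrow> pairwise disjnt (A \<union> B)"
  unfolding pairwise_def disjnt_def by blast

lemma doubleton_InlE:
  fixes A :: "nat set"
  assumes "p \<in> doubletons (Inl ` A)"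
  obtains a c where "p = {Inl a, Inl c}" "a \<in> A" "c \<in> A" "a < c"
proof -
  obtain x y where "p = {x, y}" "x \<noteq> y" "x \<in> Inl ` A" "y \<in> Inl ` A"
    using assms by (auto simp: doubletons_def card_2_iff)
  then obtain u v where uv: "p = {Inl u, Inl v}" "u \<in> A" "v \<in> A" "u \<noteq> v"
    by blast
  show thesis
  proof (cases "u < v")
    case True
    then show thesis using that[of u v] uv by blast
  next
    case False
    then have "v < u" using uv(4) by linarith
    then show thesis using that[of v u] uv by (simp add: insert_commute)
  qed
qed

section \<open>Matchings covering a prescribed set\<close>

definition covering_matchings :: "'a set \<Rightarrow> 'a set \<Rightarrow> nat \<Rightarrow> 'a set set set" where
  "covering_matchings L H k = {B \<in> matchings (L \<union> H) k. H \<subseteq> \<Union>B \<and> (\<forall>p\<in>B. p \<inter> L \<noteq> {})}"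

lemma covering_matchings_empty: "covering_matchings L {} k = matchings L k"
  unfolding covering_matchings_def matchings_def doubletons_def by (force simp: card_2_iff)

lemma covering_matchings_0:
  "finite L \<Longrightarrow> finite H \<Longrightarrow> H \<noteq> {} \<Longrightarrow> covering_matchings L H 0 = {}"
  unfolding covering_matchings_def using matchings_0[of "L \<union> H"] by auto

lemma Union_covering_matching_subset: "B \<in> covering_matchings L H k \<Longrightarrow> \<Union>B \<subseteq> L \<union> H"
  by (auto simp: covering_matchings_def matchings_def doubletons_def)

lemma finite_covering_matchings:
  "finite L \<Longrightarrow> finite H \<Longrightarrow> finite (covering_matchings L H k)"
  unfolding covering_matchings_def
  by (rule finite_subset[OF _ finite_matchings[of "L \<union> H" k]]) auto

lemma card_uncovered_covering_matching:
  assumes "finite L" "finite H" "L \<inter> H = {}" "B \<in> covering_matchings L H k"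
  shows "card (L - \<Union>B) + 2 * k = card L + card H"
proof -
  have B: "B \<in> matchings (L \<union> H) k" "H \<subseteq> \<Union>B"
    using assms(4) by (auto simp: covering_matchings_def)
  have Union_split: "\<Union>B = (\<Union>B \<inter> L) \<union> H"
    using Union_covering_matching_subset[OF assms(4)] B(2) by blast
  have "2 * k = card (\<Union>B)"
    using card_Union_matching[OF _ B(1)] assms(1,2) by simp
  also have "\<dots> = card (\<Union>B \<inter> L) + card H"
    by (subst Union_split, rule card_Un_disjoint) (use assms(1-3) in auto)
  finally have "2 * k = card (\<Union>B \<inter> L) + card H" .
  moreover have "card (L - \<Union>B) = card L - card (\<Union>B \<inter> L)"
    using assms(1) by (simp add: card_Diff_subset_Int Int_commute)
  moreover have "card (\<Union>B \<inter> L) \<le> card L"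
    using assms(1) by (simp add: card_mono)
  ultimately show ?thesis by linarith
qed

lemma covering_matching_remove_pair:
  assumes "x \<notin> L" "x \<notin> H" "L \<inter> H = {}" "finite L" "finite H"
    and B: "B \<in> covering_matchings L (insert x H) (Suc k)"
  obtains y where "y \<in> L" "{x, y} \<in> B" "B - {{x, y}} \<in> covering_matchings (L - {y}) H k"
proof -
  have B_props: "B \<in> matchings (L \<union> insert x H) (Suc k)" "insert x H \<subseteq> \<Union>B"
    "\<forall>p\<in>B. p \<inter> L \<noteq> {}"
    using B by (auto simp: covering_matchings_def)
  obtain p where p: "p \<in> B" "x \<in> p" using B_props(2) by auto
  obtain y where y: "y \<in> p" "y \<in> L" using B_props(3) p(1) by auto
  have "card p = 2" using B_props(1) p(1) by (auto simp: matchings_def doubletons_def)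
  with p y assms(1) have p_eq: "p = {x, y}" by (auto simp: card_2_iff)
  have "L \<union> insert x H - p = L - {y} \<union> H"
    using p_eq y(2) assms(1-3) by auto
  then have rest: "B - {p} \<in> matchings (L - {y} \<union> H) k"
    using matchings_remove[OF B_props(1) p(1)] assms(4,5) by simp
  have avoid: "x \<notin> q" "y \<notin> q" if "q \<in> B - {p}" for q
  proof -
    have "q \<subseteq> L - {y} \<union> H"
      using rest that by (auto simp: matchings_def doubletons_def)
    then show "x \<notin> q" "y \<notin> q" using assms(1-3) y(2) by auto
  qed
  have "H \<subseteq> \<Union>(B - {p})"
  proof
    fix z assume z: "z \<in> H"
    then obtain q where "q \<in> B" "z \<in> q" using B_props(2) by auto
    moreover have "z \<noteq> x" "z \<noteq> y" using z y(2) assms(2,3) by auto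
    ultimately show "z \<in> \<Union>(B - {p})" using p_eq by auto
  qed
  moreover have "\<forall>q\<in>B - {p}. q \<inter> (L - {y}) \<noteq> {}"
    using B_props(3) avoid by auto
  ultimately have "B - {p} \<in> covering_matchings (L - {y}) H k"
    using rest by (simp add: covering_matchings_def)
  then show thesis using that y(2) p(1) p_eq by blast
qed

lemma covering_matching_insert_pair:
  assumes "x \<notin> L" "x \<notin> H" "L \<inter> H = {}" "finite L" "finite H"
    and "y \<in> L" and B: "B \<in> covering_matchings (L - {y}) H k"
  shows "insert {x, y} B \<in> covering_matchings L (insert x H) (Suc k)"
proof -
  have B_props: "B \<in> matchings (L - {y} \<union> H) k" "H \<subseteq> \<Union>B" "\<forall>p\<in>B. p \<inter> (L - {y}) \<noteq> {}"
    using B by (auto simp: covering_matchings_def)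
  have "x \<noteq> y" using assms(1,6) by blast
  then have "{x, y} \<in> doubletons (L \<union> insert x H)"
    using assms(6) by (auto simp: doubletons_def)
  moreover have "L \<union> insert x H - {x, y} = L - {y} \<union> H"
    using assms(1-3,6) by auto
  ultimately have "insert {x, y} B \<in> matchings (L \<union> insert x H) (Suc k)"
    using matchings_insert(1)[of B "L \<union> insert x H" "{x, y}" k] B_props(1) assms(4,5) by simp
  then show ?thesis
    using B_props(2,3) assms(6) by (auto simp: covering_matchings_def)
qed

lemma covering_matchings_insert:
  assumes "x \<notin> L" "x \<notin> H" "L \<inter> H = {}" "finite L" "finite H"
  shows "covering_matchings L (insert x H) (Suc k) =
    (\<Union>y\<in>L. insert {x, y} ` covering_matchings (L - {y}) H k)"
proof (intro equalityI subsetI)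
  fix B assume "B \<in> covering_matchings L (insert x H) (Suc k)"
  then obtain y where "y \<in> L" "{x, y} \<in> B" "B - {{x, y}} \<in> covering_matchings (L - {y}) H k"
    using covering_matching_remove_pair[OF assms] by blast
  moreover from this have "B = insert {x, y} (B - {{x, y}})" by blast
  ultimately show "B \<in> (\<Union>y\<in>L. insert {x, y} ` covering_matchings (L - {y}) H k)"
    by blast
qed (use covering_matching_insert_pair[OF assms] in blast)

lemma card_covering_matchings_insert:
  assumes "x \<notin> L" "x \<notin> H" "L \<inter> H = {}" "finite L" "finite H"
  shows "card (covering_matchings L (insert x H) (Suc k)) =
    (\<Sum>y\<in>L. card (covering_matchings (L - {y}) H k))"
proof -
  have x_pair_notin: "{x, y} \<notin> B" if "B \<in> covering_matchings (L - {z}) H k" for y z B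
    using Union_covering_matching_subset[OF that] assms(1,2) by blast
  have "card (covering_matchings L (insert x H) (Suc k)) =
      (\<Sum>y\<in>L. card (insert {x, y} ` covering_matchings (L - {y}) H k))"
    unfolding covering_matchings_insert[OF assms]
  proof (rule card_UN_disjoint)
    show "\<forall>y\<in>L. finite (insert {x, y} ` covering_matchings (L - {y}) H k)"
      using assms(4,5) by (simp add: finite_covering_matchings)
    show "\<forall>y\<in>L. \<forall>z\<in>L. y \<noteq> z \<longrightarrow>
      insert {x, y} ` covering_matchings (L - {y}) H k \<inter>
      insert {x, z} ` covering_matchings (L - {z}) H k = {}"
    proof (intro ballI impI equalityI subsetI)
      fix y z B assume yz: "y \<in> L" "z \<in> L" "y \<noteq> z" and
        "B \<in> insert {x, y} ` covering_matchings (L - {y}) H k \<inter>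
          insert {x, z} ` covering_matchings (L - {z}) H k"
      then obtain B2 where "B2 \<in> covering_matchings (L - {z}) H k" "{x, y} \<in> insert {x, z} B2"
        by blast
      moreover have "{x, y} \<noteq> {x, z}" using yz assms(1) by (auto simp: doubleton_eq_iff)
      ultimately show "B \<in> {}" using x_pair_notin by blast
    qed simp
  qed (use assms in simp)
  also have "\<dots> = (\<Sum>y\<in>L. card (covering_matchings (L - {y}) H k))"
    using x_pair_notin by (intro sum.cong refl card_image) (simp add: inj_on_def insert_ident)
  finally show ?thesis .
qed

lemma card_covering_matchings:
  assumes "finite L" "finite H" "L \<inter> H = {}"
  shows "real (card (covering_matchings L H k)) =
    (if card H \<le> k then (\<Prod>t<card H. real (card L - t)) * (1 / fact (k - card H))
        * (\<Prod>i<k - card H. real ((card L - card H - 2 * i) choose 2)) else 0)"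
  using assms(2,1,3)
proof (induction H arbitrary: L k rule: finite_induct)
  case empty
  then show ?case by (simp add: covering_matchings_empty card_matchings)
next
  case (insert x H)
  show ?case
  proof (cases k)
    case 0
    with insert show ?thesis by (simp add: covering_matchings_0)
  next
    case (Suc k')
    let ?rest = "if card H \<le> k' then (\<Prod>t<card H. real (card L - 1 - t)) * (1 / fact (k' - card H))
        * (\<Prod>i<k' - card H. real ((card L - 1 - card H - 2 * i) choose 2)) else 0"
    have "real (card (covering_matchings (L - {y}) H k')) = ?rest" if "y \<in> L" for y
    proof -
      have "card (L - {y}) = card L - 1" "finite (L - {y})" "(L - {y}) \<inter> H = {}"
        using that insert.prems by auto
      then show ?thesis using insert.IH[of "L - {y}" k'] by simp
    qed
    then have "real (card (covering_matchings L (insert x H) k)) = real (card L) * ?rest"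
      using card_covering_matchings_insert[of x L H k'] insert Suc by simp
    moreover have "(\<Prod>t<Suc (card H). real (card L - t)) =
        real (card L) * (\<Prod>t<card H. real (card L - 1 - t))"
      by (simp add: prod.lessThan_Suc_shift del: prod.lessThan_Suc)
    ultimately show ?thesis using insert.hyps Suc by simp
  qed
qed

section \<open>Ordered wirings are the wirings leaving \<open>b\<^sub>h\<close> unpaired\<close>

lemma Inl_in_devices: "Inl a \<in> devices I S \<longleftrightarrow> 1 \<le> a \<and> a \<le> I"
  by (auto simp: devices_def)

lemma Inr_in_devices: "Inr a \<in> devices I S \<longleftrightarrow> 1 \<le> a \<and> a \<le> S"
  by (auto simp: devices_def)

lemma finite_devices: "finite (devices I S)"
  by (simp add: devices_def)

lemma card_devices: "card (devices I S) = I + S"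
  unfolding devices_def by (subst card_Un_disjoint) (auto simp: card_image)

text \<open>\<open>Inl a\<close> chose the pair \<open>{Inl a, d}\<close> when all earlier infected devices were already
  paired; an infected partner \<open>d\<close> therefore comes later.\<close>

definition chosen_pair :: "nat \<Rightarrow> nat \<Rightarrow> device set set \<Rightarrow> device set \<Rightarrow> bool" where
  "chosen_pair I S M p \<longleftrightarrow> (\<exists>a d. p = {Inl a, d} \<and> Inl a \<in> devices I S \<and> d \<in> devices I S \<and>
     d \<noteq> Inl a \<and> (\<forall>c. d = Inl c \<longrightarrow> a < c) \<and> (\<forall>c. 1 \<le> c \<and> c < a \<longrightarrow> Inl c \<in> \<Union>M))"

lemma chosen_pair_mono:
  assumes "chosen_pair I S M p" "\<Union>M \<subseteq> \<Union>M'"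
  shows "chosen_pair I S M' p"
proof -
  obtain a d where "p = {Inl a, d}" "Inl a \<in> devices I S" "d \<in> devices I S" "d \<noteq> Inl a"
    "\<forall>c. d = Inl c \<longrightarrow> a < c" "\<forall>c. 1 \<le> c \<and> c < a \<longrightarrow> Inl c \<in> \<Union>M"
    using assms(1) unfolding chosen_pair_def by blast
  moreover from this(6) have "\<forall>c. 1 \<le> c \<and> c < a \<longrightarrow> Inl c \<in> \<Union>M'"
    using assms(2) by blast
  ultimately show ?thesis
    unfolding chosen_pair_def by (intro exI[of _ a] exI[of _ d]) blast
qed

definition reachable_invariant :: "nat \<Rightarrow> nat \<Rightarrow> nat \<Rightarrow> device set set \<Rightarrow> bool" where
  "reachable_invariant I S t M \<longleftrightarrow> pairwise disjnt M \<and> (\<forall>p\<in>M. chosen_pair I S M p) \<and>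
    (\<forall>a. 1 \<le> a \<and> a \<le> t \<longrightarrow> Inl a \<in> \<Union>M \<or> unpaired I S M = {Inl a})"

lemma reachable_invariant_pair:
  assumes inv: "reachable_invariant I S t M"
    and t: "Inl (Suc t) \<in> unpaired I S M" and d: "d \<in> unpaired I S M - {Inl (Suc t)}"
  shows "reachable_invariant I S (Suc t) (insert {Inl (Suc t), d} M)"
proof -
  let ?M = "insert {Inl (Suc t), d} M"
  have disj: "pairwise disjnt M" and pairs: "\<forall>p\<in>M. chosen_pair I S M p"
    and paired: "\<forall>a. 1 \<le> a \<and> a \<le> t \<longrightarrow> Inl a \<in> \<Union>M \<or> unpaired I S M = {Inl a}"
    using inv unfolding reachable_invariant_def by blast+
  have earlier_paired: "Inl c \<in> \<Union>M" if "1 \<le> c" "c \<le> t" for c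
  proof (rule ccontr)
    assume "Inl c \<notin> \<Union>M"
    then have "unpaired I S M = {Inl c}" using paired that by blast
    then show False using t that(2) by simp
  qed
  have d': "d \<in> devices I S" "d \<notin> \<Union>M" "d \<noteq> Inl (Suc t)"
    and t': "Inl (Suc t) \<in> devices I S" "Inl (Suc t) \<notin> \<Union>M"
    using d t by (auto simp: unpaired_def)
  have later: "Suc t < c" if "d = Inl c" for c
  proof -
    have "1 \<le> c" using d'(1) that by (simp add: Inl_in_devices)
    then have "\<not> c \<le> t" using earlier_paired d'(2) that by blast
    then show ?thesis using d'(3) that by simp
  qed
  have "pairwise disjnt ?M"
    unfolding pairwise_insert using disj d'(2) t'(2) by (auto simp: disjnt_def)
  moreover have "chosen_pair I S ?M {Inl (Suc t), d}"
    unfolding chosen_pair_def using d' t' later earlier_paired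
    by (intro exI[of _ "Suc t"] exI[of _ d]) auto
  moreover have "chosen_pair I S ?M p" if "p \<in> M" for p
    using pairs that by (blast intro: chosen_pair_mono)
  moreover have "\<forall>a. 1 \<le> a \<and> a \<le> Suc t \<longrightarrow> Inl a \<in> \<Union>?M \<or> unpaired I S ?M = {Inl a}"
    using earlier_paired by (auto simp: le_Suc_eq)
  ultimately show ?thesis unfolding reachable_invariant_def by blast
qed

lemma reachable_invariant_skip:
  assumes inv: "reachable_invariant I S t M" and "Suc t \<le> I"
    and skip: "\<not> (Inl (Suc t) \<in> unpaired I S M \<and> unpaired I S M - {Inl (Suc t)} \<noteq> {})"
  shows "reachable_invariant I S (Suc t) M"
proof -
  have paired: "\<forall>a. 1 \<le> a \<and> a \<le> t \<longrightarrow> Inl a \<in> \<Union>M \<or> unpaired I S M = {Inl a}"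
    using inv unfolding reachable_invariant_def by blast
  have "Inl (Suc t) \<in> \<Union>M \<or> unpaired I S M = {Inl (Suc t)}"
    using skip assms(2) by (auto simp: unpaired_def Inl_in_devices)
  then have "\<forall>a. 1 \<le> a \<and> a \<le> Suc t \<longrightarrow> Inl a \<in> \<Union>M \<or> unpaired I S M = {Inl a}"
    using paired by (auto simp: le_Suc_eq)
  then show ?thesis
    using inv unfolding reachable_invariant_def by blast
qed

lemma reachable_invariant: "t \<le> I \<Longrightarrow> M \<in> reachable I S t \<Longrightarrow> reachable_invariant I S t M"
proof (induction t arbitrary: M)
  case 0
  then show ?case by (simp add: reachable_invariant_def)
next
  case (Suc t)
  then obtain M0 where M0: "M0 \<in> reachable I S t" and
    step: "if Inl (Suc t) \<in> unpaired I S M0 \<and> unpaired I S M0 - {Inl (Suc t)} \<noteq> {}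
      then (\<exists>d \<in> unpaired I S M0 - {Inl (Suc t)}. M = insert {Inl (Suc t), d} M0)
      else M = M0"
    by auto
  have inv: "reachable_invariant I S t M0" using Suc.IH M0 Suc.prems(1) by simp
  show ?case
  proof (cases "Inl (Suc t) \<in> unpaired I S M0 \<and> unpaired I S M0 - {Inl (Suc t)} \<noteq> {}")
    case True
    then obtain d where "d \<in> unpaired I S M0 - {Inl (Suc t)}" "M = insert {Inl (Suc t), d} M0"
      using step[unfolded if_P[OF True]] by blast
    then show ?thesis using reachable_invariant_pair[OF inv] True by simp
  next
    case False
    then show ?thesis
      using step[unfolded if_not_P[OF False]] reachable_invariant_skip[OF inv Suc.prems(1)] by simp
  qed
qed

definition ordered_wiring :: "nat \<Rightarrow> nat \<Rightarrow> nat \<Rightarrow> device set set \<Rightarrow> bool" where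
  "ordered_wiring I S h M \<longleftrightarrow> pairwise disjnt M \<and> \<Union>M = devices I S - {Inl h} \<and>
     (\<forall>p\<in>M. \<exists>a d. p = {Inl a, d} \<and> a < h \<and> (\<forall>c. d = Inl c \<longrightarrow> a < c))"

lemma ordered_wiring_disjoint: "ordered_wiring I S h M \<Longrightarrow> pairwise disjnt M"
  by (simp add: ordered_wiring_def)

lemma ordered_wiring_Union: "ordered_wiring I S h M \<Longrightarrow> \<Union>M = devices I S - {Inl h}"
  by (simp add: ordered_wiring_def)

lemma ordered_wiring_pair_unique:
  "ordered_wiring I S h M \<Longrightarrow> p \<in> M \<Longrightarrow> q \<in> M \<Longrightarrow> z \<in> p \<Longrightarrow> z \<in> q \<Longrightarrow> p = q"
  using ordered_wiring_disjoint[of I S h M] unfolding pairwise_def disjnt_def by blast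

lemma ordered_wiring_pair:
  assumes "ordered_wiring I S h M" "p \<in> M"
  shows "\<exists>a d. p = {Inl a, d} \<and> 1 \<le> a \<and> a < h \<and> d \<in> devices I S \<and> d \<noteq> Inl a \<and>
    (\<forall>c. d = Inl c \<longrightarrow> a < c)"
proof -
  have "\<forall>p\<in>M. \<exists>a d. p = {Inl a, d} \<and> a < h \<and> (\<forall>c. d = Inl c \<longrightarrow> a < c)"
    using assms(1) by (simp add: ordered_wiring_def)
  then obtain a d where "p = {Inl a, d}" "a < h" "\<forall>c. d = Inl c \<longrightarrow> a < c"
    using bspec[OF _ assms(2)] by blast
  moreover have "p \<subseteq> devices I S"
    using ordered_wiring_Union[OF assms(1)] assms(2) by blast
  ultimately show ?thesis
    by (intro exI[of _ a] exI[of _ d]) (auto simp: Inl_in_devices)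
qed

lemma ordered_wiring_if_reachable:
  assumes h: "1 \<le> h" "h \<le> I" and M: "M \<in> reachable I S I" and unpaired_h: "Inl h \<notin> \<Union>M"
  shows "ordered_wiring I S h M"
proof -
  have disj: "pairwise disjnt M" and pairs: "\<forall>p\<in>M. chosen_pair I S M p"
    and paired: "\<forall>a. 1 \<le> a \<and> a \<le> I \<longrightarrow> Inl a \<in> \<Union>M \<or> unpaired I S M = {Inl a}"
    using reachable_invariant[OF order_refl M] unfolding reachable_invariant_def by blast+
  have "\<Union>M \<subseteq> devices I S"
    using pairs by (fastforce simp: chosen_pair_def)
  moreover have "unpaired I S M = {Inl h}"
    using paired h unpaired_h by blast
  ultimately have "\<Union>M = devices I S - {Inl h}"
    by (auto simp: unpaired_def)
  moreover have "\<exists>a d. p = {Inl a, d} \<and> a < h \<and> (\<forall>c. d = Inl c \<longrightarrow> a < c)" if "p \<in> M" for p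
  proof -
    obtain a d where "p = {Inl a, d}" "\<forall>c. d = Inl c \<longrightarrow> a < c"
      and earlier_paired: "\<forall>c. 1 \<le> c \<and> c < a \<longrightarrow> Inl c \<in> \<Union>M"
      using pairs \<open>p \<in> M\<close> unfolding chosen_pair_def by blast
    moreover have "a \<noteq> h" using \<open>p = {Inl a, d}\<close> that unpaired_h by blast
    moreover have "\<not> h < a" using earlier_paired h unpaired_h by blast
    ultimately show ?thesis by (intro exI[of _ a] exI[of _ d]) simp
  qed
  ultimately show ?thesis using disj by (simp add: ordered_wiring_def)
qed

text \<open>In an ordered wiring, the pairs chosen during the first \<open>t\<close> steps.\<close>

definition wiring_prefix :: "nat \<Rightarrow> device set set \<Rightarrow> device set set" where
  "wiring_prefix t M = {p \<in> M. \<exists>a \<le> t. Inl a \<in> p}"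

lemma in_wiring_prefix_iff:
  assumes "p \<in> M" "p = {Inl a, d}" "\<forall>c. d = Inl c \<longrightarrow> a < c"
  shows "p \<in> wiring_prefix t M \<longleftrightarrow> a \<le> t"
  using assms by (auto simp: wiring_prefix_def)

lemma wiring_prefix_Suc_pair:
  assumes ow: "ordered_wiring I S h M" and p: "{Inl (Suc t), d} \<in> M"
    and later: "\<forall>c. d = Inl c \<longrightarrow> Suc t < c"
  shows "wiring_prefix (Suc t) M = insert {Inl (Suc t), d} (wiring_prefix t M)"
    and "Inl (Suc t) \<in> unpaired I S (wiring_prefix t M)"
    and "d \<in> unpaired I S (wiring_prefix t M) - {Inl (Suc t)}"
proof -
  let ?p = "{Inl (Suc t), d}"
  have unique: "q = ?p" if "q \<in> M" "z \<in> q" "z \<in> ?p" for q z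
    using ordered_wiring_pair_unique[OF ow that(1) p that(2,3)] .
  have p_later: "?p \<notin> wiring_prefix t M"
    using in_wiring_prefix_iff[OF p refl later] by simp
  show "wiring_prefix (Suc t) M = insert ?p (wiring_prefix t M)"
  proof (intro equalityI subsetI)
    fix q assume "q \<in> wiring_prefix (Suc t) M"
    then obtain b where "q \<in> M" "b \<le> Suc t" "Inl b \<in> q" by (auto simp: wiring_prefix_def)
    then show "q \<in> insert ?p (wiring_prefix t M)"
      using unique[of q "Inl b"] by (cases "b = Suc t") (auto simp: wiring_prefix_def)
  next
    fix q assume "q \<in> insert ?p (wiring_prefix t M)"
    then show "q \<in> wiring_prefix (Suc t) M"
      using p by (auto simp: wiring_prefix_def le_Suc_eq)
  qed
  have "?p \<subseteq> devices I S"
    using ordered_wiring_Union[OF ow] p by blast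
  moreover have "d \<noteq> Inl (Suc t)"
    using later by blast
  moreover have "z \<notin> \<Union>(wiring_prefix t M)" if "z \<in> ?p" for z
  proof
    assume "z \<in> \<Union>(wiring_prefix t M)"
    then obtain q where q: "q \<in> wiring_prefix t M" "z \<in> q" by blast
    then have "q = ?p" using unique[of q z] \<open>z \<in> ?p\<close> by (auto simp: wiring_prefix_def)
    then show False using p_later q(1) by simp
  qed
  ultimately show "Inl (Suc t) \<in> unpaired I S (wiring_prefix t M)"
    and "d \<in> unpaired I S (wiring_prefix t M) - {Inl (Suc t)}"
    by (auto simp: unpaired_def)
qed

lemma ordered_wiring_pair_not_initiator:
  assumes ow: "ordered_wiring I S h M" and "p \<in> M"
    and no_pair: "\<nexists>d. {Inl b, d} \<in> M \<and> (\<forall>c. d = Inl c \<longrightarrow> b < c)"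
  shows "\<exists>a d. p = {Inl a, d} \<and> a \<noteq> b \<and> a < h \<and> (\<forall>c. d = Inl c \<longrightarrow> a < c)"
proof -
  obtain a d where "p = {Inl a, d}" "a < h" "\<forall>c. d = Inl c \<longrightarrow> a < c"
    using ordered_wiring_pair[OF ow \<open>p \<in> M\<close>] by blast
  moreover have "a \<noteq> b" using no_pair calculation \<open>p \<in> M\<close> by blast
  ultimately show ?thesis by blast
qed

lemma wiring_prefix_Suc_skip:
  assumes ow: "ordered_wiring I S h M"
    and no_pair: "\<nexists>d. {Inl (Suc t), d} \<in> M \<and> (\<forall>c. d = Inl c \<longrightarrow> Suc t < c)"
  shows "wiring_prefix (Suc t) M = wiring_prefix t M"
proof -
  have "p \<in> wiring_prefix (Suc t) M \<longleftrightarrow> p \<in> wiring_prefix t M" if "p \<in> M" for p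
  proof -
    obtain a d where "p = {Inl a, d}" "a \<noteq> Suc t" "\<forall>c. d = Inl c \<longrightarrow> a < c"
      using ordered_wiring_pair_not_initiator[OF ow \<open>p \<in> M\<close> no_pair] by blast
    then show ?thesis using in_wiring_prefix_iff[OF that] by (simp add: le_Suc_eq)
  qed
  moreover have "wiring_prefix t' M \<subseteq> M" for t'
    by (auto simp: wiring_prefix_def)
  ultimately show ?thesis by blast
qed

lemma wiring_prefix_skip_no_choice:
  assumes ow: "ordered_wiring I S h M" and "Suc t \<le> I"
    and no_pair: "\<nexists>d. {Inl (Suc t), d} \<in> M \<and> (\<forall>c. d = Inl c \<longrightarrow> Suc t < c)"
  shows "\<not> (Inl (Suc t) \<in> unpaired I S (wiring_prefix t M) \<and>
            unpaired I S (wiring_prefix t M) - {Inl (Suc t)} \<noteq> {})"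
proof (cases "Suc t = h")
  case True
  have "p \<in> wiring_prefix t M" if "p \<in> M" for p
  proof -
    obtain a d where "p = {Inl a, d}" "a < h" "\<forall>c. d = Inl c \<longrightarrow> a < c"
      using ordered_wiring_pair[OF ow \<open>p \<in> M\<close>] by blast
    then show ?thesis using in_wiring_prefix_iff[OF that] True by simp
  qed
  then have "wiring_prefix t M = M"
    by (auto simp: wiring_prefix_def)
  then show ?thesis using ordered_wiring_Union[OF ow] True by (auto simp: unpaired_def)
next
  case False
  then have "Inl (Suc t) \<in> \<Union>M"
    using ordered_wiring_Union[OF ow] assms(2) by (auto simp: Inl_in_devices)
  then obtain p where p: "p \<in> M" "Inl (Suc t) \<in> p" by blast
  then obtain a d where "p = {Inl a, d}" "a \<noteq> Suc t" "\<forall>c. d = Inl c \<longrightarrow> a < c"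
    using ordered_wiring_pair_not_initiator[OF ow p(1) no_pair] by blast
  then have "p \<in> wiring_prefix t M"
    using p in_wiring_prefix_iff[OF p(1)] by auto
  then show ?thesis using p by (auto simp: unpaired_def)
qed

lemma wiring_prefix_reachable:
  assumes ow: "ordered_wiring I S h M"
  shows "t \<le> I \<Longrightarrow> wiring_prefix t M \<in> reachable I S t"
proof (induction t)
  case 0
  have "p \<notin> wiring_prefix 0 M" if "p \<in> M" for p
  proof -
    obtain a d where "p = {Inl a, d}" "1 \<le> a" "\<forall>c. d = Inl c \<longrightarrow> a < c"
      using ordered_wiring_pair[OF ow \<open>p \<in> M\<close>] by blast
    then show ?thesis using in_wiring_prefix_iff[OF that] by simp
  qed
  then have "wiring_prefix 0 M = {}"
    by (auto simp: wiring_prefix_def)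
  then show ?case by simp
next
  case (Suc t)
  then have IH: "wiring_prefix t M \<in> reachable I S t" by simp
  show ?case
  proof (cases "\<exists>d. {Inl (Suc t), d} \<in> M \<and> (\<forall>c. d = Inl c \<longrightarrow> Suc t < c)")
    case True
    then obtain d where "{Inl (Suc t), d} \<in> M" "\<forall>c. d = Inl c \<longrightarrow> Suc t < c" by blast
    note step = wiring_prefix_Suc_pair[OF ow this]
    then have "Inl (Suc t) \<in> unpaired I S (wiring_prefix t M) \<and>
        unpaired I S (wiring_prefix t M) - {Inl (Suc t)} \<noteq> {}"
      by blast
    moreover have "\<exists>d'\<in>unpaired I S (wiring_prefix t M) - {Inl (Suc t)}.
        wiring_prefix (Suc t) M = insert {Inl (Suc t), d'} (wiring_prefix t M)"
      using step(1,3) by blast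
    ultimately show ?thesis unfolding reachable.simps
      using IH by (intro CollectI bexI[where x = "wiring_prefix t M"]) simp_all
  next
    case False
    have "wiring_prefix (Suc t) M = wiring_prefix t M"
      and "\<not> (Inl (Suc t) \<in> unpaired I S (wiring_prefix t M) \<and>
            unpaired I S (wiring_prefix t M) - {Inl (Suc t)} \<noteq> {})"
      using wiring_prefix_Suc_skip[OF ow False] wiring_prefix_skip_no_choice[OF ow Suc.prems False]
      by blast+
    then show ?thesis unfolding reachable.simps
      using IH by (intro CollectI bexI[OF _ IH]) (simp only: if_False)
  qed
qed

lemma reachable_unpaired_iff_ordered_wiring:
  assumes "1 \<le> h" "h \<le> I"
  shows "M \<in> reachable I S I \<and> Inl h \<notin> \<Union>M \<longleftrightarrow> ordered_wiring I S h M"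
proof
  assume ow: "ordered_wiring I S h M"
  have "p \<in> wiring_prefix I M" if "p \<in> M" for p
  proof -
    obtain a d where "p = {Inl a, d}" "a < h" "\<forall>c. d = Inl c \<longrightarrow> a < c"
      using ordered_wiring_pair[OF ow \<open>p \<in> M\<close>] by blast
    then show ?thesis using in_wiring_prefix_iff[OF that] assms(2) by simp
  qed
  then have "wiring_prefix I M = M"
    by (auto simp: wiring_prefix_def)
  then show "M \<in> reachable I S I \<and> Inl h \<notin> \<Union>M"
    using wiring_prefix_reachable[OF ow, of I] ordered_wiring_Union[OF ow] by auto
qed (use ordered_wiring_if_reachable assms in blast)

section \<open>The bb-pairings of ordered wirings\<close>

lemma card_ordered_wiring:
  assumes ow: "ordered_wiring I S h M" and "1 \<le> h" "h \<le> I"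
  shows "2 * card M = I + S - 1"
proof -
  have "p \<in> doubletons (devices I S)" if "p \<in> M" for p
  proof -
    obtain a d where "p = {Inl a, d}" "1 \<le> a" "a < h" "d \<in> devices I S" "d \<noteq> Inl a"
      using ordered_wiring_pair[OF ow \<open>p \<in> M\<close>] by blast
    then show ?thesis using assms(3) by (auto simp: doubletons_def Inl_in_devices)
  qed
  then have "M \<subseteq> doubletons (devices I S)" by blast
  then have "M \<in> matchings (devices I S) (card M)"
    using ordered_wiring_disjoint[OF ow] by (simp add: matchings_def)
  then have "2 * card M = card (\<Union>M)"
    using card_Union_matching finite_devices by metis
  also have "\<dots> = I + S - 1"
    using ordered_wiring_Union[OF ow] assms(2,3)
    by (simp add: card_devices finite_devices Inl_in_devices)
  finally show ?thesis .
qed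

lemma bij_betw_mixed_pairs_clean_devices:
  assumes ow: "ordered_wiring I S h M"
  shows "bij_betw (\<lambda>p. p \<inter> range Inr) (M - bb_pairings M) ((\<lambda>k. {Inr k}) ` {1..S})"
proof -
  let ?clean = "\<lambda>p. p \<inter> range Inr"
  have mixed: "\<exists>k. p = {Inl a, Inr k} \<and> 1 \<le> k \<and> k \<le> S"
    if "p \<in> M - bb_pairings M" "p = {Inl a, d}" "d \<in> devices I S" for p a d
    using that by (cases d) (auto simp: bb_pairings_def Inr_in_devices)
  show ?thesis
  proof (rule bij_betw_imageI)
    show "inj_on ?clean (M - bb_pairings M)"
    proof (rule inj_onI)
      fix p q assume p: "p \<in> M - bb_pairings M" and q: "q \<in> M - bb_pairings M"
        and eq: "?clean p = ?clean q"
      obtain a d where "p = {Inl a, d}" "d \<in> devices I S"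
        using ordered_wiring_pair[OF ow, of p] p by blast
      then obtain k where "Inr k \<in> p" using mixed p by blast
      then show "p = q" using ordered_wiring_pair_unique[OF ow, of p q "Inr k"] p q eq by blast
    qed
    show "?clean ` (M - bb_pairings M) = (\<lambda>k. {Inr k}) ` {1..S}"
    proof (intro equalityI subsetI)
      fix y :: "device set" assume "y \<in> ?clean ` (M - bb_pairings M)"
      then obtain p where "p \<in> M - bb_pairings M" "y = ?clean p" by blast
      moreover obtain a d where "p = {Inl a, d}" "d \<in> devices I S"
        using ordered_wiring_pair[OF ow, of p] calculation(1) by blast
      ultimately obtain k where "p = {Inl a, Inr k}" "1 \<le> k" "k \<le> S" "y = ?clean p"
        using mixed by blast
      then show "y \<in> (\<lambda>k. {Inr k}) ` {1..S}" by auto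
    next
      fix y :: "device set" assume "y \<in> (\<lambda>k. {Inr k}) ` {1..S}"
      then obtain k where k: "y = {Inr k}" "1 \<le> k" "k \<le> S" by auto
      then have "Inr k \<in> \<Union>M"
        using ordered_wiring_Union[OF ow] by (auto simp: Inr_in_devices)
      then obtain p where p: "p \<in> M" "Inr k \<in> p" by blast
      then obtain a d where "p = {Inl a, d}" using ordered_wiring_pair[OF ow p(1)] by blast
      then have "p \<in> M - bb_pairings M" "?clean p = y"
        using p k by (auto simp: bb_pairings_def)
      then show "y \<in> ?clean ` (M - bb_pairings M)" by blast
    qed
  qed
qed

lemma card_mixed_pairs: "ordered_wiring I S h M \<Longrightarrow> card (M - bb_pairings M) = S"
  using bij_betw_same_card[OF bij_betw_mixed_pairs_clean_devices]
  by (simp add: card_image inj_on_def)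

lemma card_bb_pairings:
  assumes ow: "ordered_wiring I S h M" and h: "1 \<le> h" "h \<le> I" and j: "2 * j = I - S - 1"
  shows "card (bb_pairings M) = j"
proof -
  have "finite M"
    using ordered_wiring_Union[OF ow] finite_devices[of I S] by (metis finite_Diff finite_UnionD)
  moreover have "bb_pairings M \<subseteq> M" by (auto simp: bb_pairings_def)
  ultimately have "card M = card (bb_pairings M) + card (M - bb_pairings M)"
    by (simp add: card_Diff_subset card_mono finite_subset)
  then show ?thesis
    using card_ordered_wiring[OF ow h] card_mixed_pairs[OF ow] j by linarith
qed

lemma bb_pairings_ordered_wiring:
  assumes ow: "ordered_wiring I S h M" and h: "1 \<le> h" "h \<le> I" and j: "2 * j = I - S - 1"
  shows "bb_pairings M \<in> covering_matchings (Inl ` {1..<h}) (Inl ` {h<..I}) j"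
proof -
  let ?B = "bb_pairings M"
  have BM: "?B \<subseteq> M" by (auto simp: bb_pairings_def)
  have "?B \<subseteq> doubletons (Inl ` {1..<h} \<union> Inl ` {h<..I})"
  proof
    fix p assume p: "p \<in> ?B"
    then have "p \<in> M" "p \<subseteq> range Inl" by (auto simp: bb_pairings_def)
    moreover obtain a d where "p = {Inl a, d}" "1 \<le> a" "a < h" "d \<in> devices I S"
        "\<forall>c. d = Inl c \<longrightarrow> a < c"
      using ordered_wiring_pair[OF ow \<open>p \<in> M\<close>] by blast
    ultimately obtain c where ac: "p = {Inl a, Inl c}" "1 \<le> a" "a < h" "a < c" "Inl c \<in> devices I S"
      by auto
    moreover have "c \<noteq> h"
      using ordered_wiring_Union[OF ow] \<open>p \<in> M\<close> ac(1) by blast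
    ultimately have "Inl a \<in> Inl ` {1..<h}" "Inl c \<in> Inl ` {1..<h} \<union> Inl ` {h<..I}"
      by (cases "c < h"; auto simp: Inl_in_devices)+
    then show "p \<in> doubletons (Inl ` {1..<h} \<union> Inl ` {h<..I})"
      using ac(1,4) by (auto simp: doubletons_def)
  qed
  moreover have "pairwise disjnt ?B"
    using ordered_wiring_disjoint[OF ow] BM by (rule pairwise_subset)
  moreover have "card ?B = j"
    by (rule card_bb_pairings[OF ow h j])
  moreover have "Inl ` {h<..I} \<subseteq> \<Union>?B"
  proof
    fix z :: device assume "z \<in> Inl ` {h<..I}"
    then obtain c where c: "z = Inl c" "h < c" "c \<le> I" by auto
    then have "z \<in> \<Union>M"
      using ordered_wiring_Union[OF ow] by (auto simp: Inl_in_devices)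
    then obtain p where p: "p \<in> M" "z \<in> p" by blast
    then obtain a d where "p = {Inl a, d}" "a < h" using ordered_wiring_pair[OF ow p(1)] by blast
    then have "p = {Inl a, z}" using p(2) c by auto
    then show "z \<in> \<Union>?B"
      using p c by (auto simp: bb_pairings_def)
  qed
  moreover have "\<forall>p\<in>?B. p \<inter> Inl ` {1..<h} \<noteq> {}"
  proof
    fix p assume "p \<in> ?B"
    then obtain a d where "p = {Inl a, d}" "1 \<le> a" "a < h"
      using ordered_wiring_pair[OF ow, of p] BM by blast
    then show "p \<inter> Inl ` {1..<h} \<noteq> {}" by auto
  qed
  ultimately show ?thesis by (simp add: covering_matchings_def matchings_def)
qed

lemma covering_matching_pair_ordered:
  fixes h I :: nat
  assumes "B \<in> covering_matchings (Inl ` {1..<h}) (Inl ` {h<..I}) j" "p \<in> B"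
  shows "\<exists>a d. p = {Inl a, d} \<and> a < h \<and> (\<forall>c. d = Inl c \<longrightarrow> a < c)"
proof -
  have pair: "p \<in> doubletons (Inl ` ({1..<h} \<union> {h<..I}))"
    and meets: "p \<inter> Inl ` {1..<h} \<noteq> {}"
    using assms by (auto simp: covering_matchings_def matchings_def image_Un)
  obtain a c where "p = {Inl a, Inl c}" "a \<in> {1..<h} \<union> {h<..I}"
    "c \<in> {1..<h} \<union> {h<..I}" "a < c"
    using doubleton_InlE[OF pair] by blast
  with meets have "p = {Inl a, Inl c}" "a < h" "a < c" by auto
  then show ?thesis by blast
qed

lemma ex_clean_pairing:
  assumes "R \<subseteq> Inl ` {1..<h}" "finite R" "card R = S"
  obtains C :: "device set set" where "pairwise disjnt C" "\<Union>C = R \<union> Inr ` {1..S}"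
    "\<forall>p\<in>C. \<exists>a k. p = {Inl a, Inr k} \<and> a < h"
proof -
  obtain g where g: "bij_betw g {1..S} R"
    using finite_same_card_bij[of "{1..S}" R] assms(2,3) by auto
  have g_Inl: "\<exists>a. g k = Inl a \<and> a < h" if "k \<in> {1..S}" for k
  proof -
    have "g k \<in> Inl ` {1..<h}" using bij_betwE[OF g] that assms(1) by blast
    then show ?thesis by auto
  qed
  define C where "C = (\<lambda>k. {g k, Inr k}) ` {1..S}"
  have pairs_disjnt: "disjnt {g k, Inr k} {g k', Inr k'}"
    if "k \<in> {1..S}" "k' \<in> {1..S}" "k \<noteq> k'" for k k'
  proof -
    have "g k \<noteq> g k'" using inj_onD[OF bij_betw_imp_inj_on[OF g]] that by blast
    moreover obtain a a' where "g k = Inl a" "g k' = Inl a'"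
      using g_Inl \<open>k \<in> {1..S}\<close> \<open>k' \<in> {1..S}\<close> by blast
    ultimately show ?thesis using \<open>k \<noteq> k'\<close> by (auto simp: disjnt_def)
  qed
  have "pairwise disjnt C"
    unfolding C_def by (auto intro!: pairwise_imageI pairs_disjnt)
  moreover have "\<Union>C = R \<union> Inr ` {1..S}"
    using bij_betw_imp_surj_on[OF g] by (auto simp: C_def)
  moreover have "\<forall>p\<in>C. \<exists>a k. p = {Inl a, Inr k} \<and> a < h"
    using g_Inl by (fastforce simp: C_def)
  ultimately show thesis using that by blast
qed

lemma ex_ordered_wiring_bb_pairings:
  assumes h: "1 \<le> h" "h \<le> I" and "S < I" "2 * j = I - S - 1"
    and B: "B \<in> covering_matchings (Inl ` {1..<h}) (Inl ` {h<..I}) j"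
  shows "\<exists>M. ordered_wiring I S h M \<and> bb_pairings M = B"
proof -
  define L :: "device set" where "L = Inl ` {1..<h}"
  define H :: "device set" where "H = Inl ` {h<..I}"
  have LH: "finite L" "finite H" "L \<inter> H = {}" "card L = h - 1" "card H = I - h"
    by (auto simp: L_def H_def card_image)
  have B_LH: "B \<in> covering_matchings L H j"
    using B by (simp add: L_def H_def)
  have B_props: "pairwise disjnt B" "H \<subseteq> \<Union>B" "\<Union>B \<subseteq> L \<union> H"
    using B_LH Union_covering_matching_subset[OF B_LH]
    by (auto simp: covering_matchings_def matchings_def)
  have "card (L - \<Union>B) + 2 * j = (h - 1) + (I - h)"
    using card_uncovered_covering_matching[OF LH(1-3) B_LH] LH(4,5) by simp
  then have card_R: "card (L - \<Union>B) = S"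
    using assms by linarith
  obtain C where C: "pairwise disjnt C" "\<Union>C = (L - \<Union>B) \<union> Inr ` {1..S}"
    "\<forall>p\<in>C. \<exists>a k. p = {Inl a, Inr k} \<and> a < h"
    by (rule ex_clean_pairing[of "L - \<Union>B" h S])
      (use card_R LH(1) in \<open>auto simp: L_def\<close>)
  have "pairwise disjnt (B \<union> C)"
    using B_props(1,3) C(1,2) by (intro pairwise_disjnt_Un) (auto simp: L_def H_def)
  moreover have "\<Union>(B \<union> C) = devices I S - {Inl h}"
  proof -
    have "\<Union>(B \<union> C) = Inl ` ({1..<h} \<union> {h<..I}) \<union> Inr ` {1..S}"
      using B_props(2,3) C(2) by (auto simp: L_def H_def)
    also have "{1..<h} \<union> {h<..I} = {1..I} - {h}"
      using h by auto
    finally show ?thesis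
      by (auto simp: devices_def)
  qed
  moreover have "\<exists>a d. p = {Inl a, d} \<and> a < h \<and> (\<forall>c. d = Inl c \<longrightarrow> a < c)" if "p \<in> B \<union> C" for p
  proof (cases "p \<in> B")
    case True
    then show ?thesis using covering_matching_pair_ordered[OF B] by blast
  next
    case False
    then obtain a k where "p = {Inl a, Inr k}" "a < h"
      using \<open>p \<in> B \<union> C\<close> C(3) by blast
    then show ?thesis by (intro exI[of _ a] exI[of _ "Inr k"]) simp
  qed
  ultimately have "ordered_wiring I S h (B \<union> C)"
    unfolding ordered_wiring_def by blast
  moreover have "bb_pairings (B \<union> C) = B"
    using B_props(3) C(3) by (auto simp: bb_pairings_def L_def H_def)
  ultimately show ?thesis by blast
qed

lemma N_dagger_eq_card_covering_matchings:
  assumes "1 \<le> h" "h \<le> I" "S < I" "2 * j = I - S - 1"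
  shows "N_dagger I S h = card (covering_matchings (Inl ` {1..<h} :: device set) (Inl ` {h<..I}) j)"
proof -
  have "{bb_pairings M | M. M \<in> possible_wirings I S \<and> Inl h \<notin> \<Union>M} =
      bb_pairings ` {M. ordered_wiring I S h M}"
    using reachable_unpaired_iff_ordered_wiring[OF assms(1,2)]
    by (auto simp: possible_wirings_def)
  also have "\<dots> = covering_matchings (Inl ` {1..<h}) (Inl ` {h<..I}) j"
    using bb_pairings_ordered_wiring[OF _ assms(1,2,4)] ex_ordered_wiring_bb_pairings[OF assms]
    by blast
  finally show ?thesis
    by (simp only: N_dagger_def)
qed

lemma N_dagger_formula:
  assumes "1 \<le> h" "h \<le> I" "S < I" "2 * j = I - S - 1"
  shows "real (N_dagger I S h) =
    (if I - h \<le> j then (\<Prod>t<I - h. real (h - 1 - t)) * (1 / fact (j - (I - h)))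
       * (\<Prod>i<j - (I - h). real ((h - 1 - (I - h) - 2 * i) choose 2)) else 0)"
proof -
  define L :: "device set" where "L = Inl ` {1..<h}"
  define H :: "device set" where "H = Inl ` {h<..I}"
  have LH: "finite L" "finite H" "L \<inter> H = {}"
    by (auto simp: L_def H_def)
  have card: "card L = h - 1" "card H = I - h"
    by (simp_all add: L_def H_def card_image)
  have "N_dagger I S h = card (covering_matchings L H j)"
    unfolding L_def H_def by (rule N_dagger_eq_card_covering_matchings[OF assms])
  then show ?thesis
    using card_covering_matchings[OF LH, of j] unfolding card by simp
qed

lemma N_dagger_formula_shifted:
  assumes "1 \<le> h" "h \<le> I" "S < I" "2 * j = I - S - 1" "I - h \<le> j"
  shows "real (N_dagger I S h) = (1 / fact (j - (I - h))) * (\<Prod>t=1..I - h. real (h - t))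
    * (\<Prod>t=1..j - (I - h). real ((2 * h - I - 1 - 2 * (t - 1)) choose 2))"
proof -
  have "(\<Prod>t=1..I - h. real (h - t)) = (\<Prod>t<I - h. real (h - 1 - t))"
    by (simp add: prod.atLeast1_atMost_eq)
  moreover have "(\<Prod>t=1..j - (I - h). real ((2 * h - I - 1 - 2 * (t - 1)) choose 2)) =
      (\<Prod>i<j - (I - h). real ((h - 1 - (I - h) - 2 * i) choose 2))"
    unfolding prod.atLeast1_atMost_eq[unfolded One_nat_def[symmetric]]
  proof (rule prod.cong[OF refl])
    fix i
    have "2 * h - I - 1 = h - 1 - (I - h)"
      using assms(2) by arith
    then show "real ((2 * h - I - 1 - 2 * (Suc i - 1)) choose 2) =
        real ((h - 1 - (I - h) - 2 * i) choose 2)"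
      by (simp only: diff_Suc_1)
  qed
  ultimately show ?thesis
    using N_dagger_formula[OF assms(1-4)] assms(5) by simp
qed

lemma N_dagger_eq_0:
  assumes "1 \<le> h" "h \<le> I" "S < I" "2 * j = I - S - 1" "j < I - h"
  shows "N_dagger I S h = 0"
  using N_dagger_formula[OF assms(1-4)] assms(5) by simp

lemma N_dagger_last:
  assumes "S < I" "2 * j = I - S - 1"
  shows "real (N_dagger I S I) = (1 / fact j) * (\<Prod>k<j. real ((I - 1 - 2 * k) choose 2))"
  using N_dagger_formula[of I I S j] assms by simp

lemma N_dagger_second_last:
  assumes "S < I" "2 * j = I - S - 1" "1 \<le> j"
  shows "real (N_dagger I S (I - 1)) =
    (1 / fact (j - 1)) * real (I - 2) * (\<Prod>k<j - 1. real ((I - 3 - 2 * k) choose 2))"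
proof -
  have "I - (I - 1) = 1" "(\<Prod>t<1. real (I - 1 - 1 - t)) = real (I - 2)"
    "(\<Prod>i<j - 1. real ((I - 1 - 1 - 1 - 2 * i) choose 2)) =
      (\<Prod>k<j - 1. real ((I - 3 - 2 * k) choose 2))"
    using assms by (simp_all add: numeral_3_eq_3)
  then show ?thesis
    using N_dagger_formula[of "I - 1" I S j] assms by simp
qed

theorem lemma3:
  fixes I S j :: nat
  assumes "I > S" and "odd (I + S)" and "2 * j = I - S - 1" and "j \<ge> 2"
  shows "real (N_dagger I S I) = (1 / fact j) * (\<Prod>k<j. real ((I - 1 - 2 * k) choose 2))
    \<and> real (N_dagger I S (I - 1)) =
           (1 / fact (j - 1)) * real (I - 2) * (\<Prod>k<j - 1. real ((I - 3 - 2 * k) choose 2))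
    \<and> (\<forall>h. S + 1 \<le> h \<and> h \<le> I - 2 \<longrightarrow>
         (j < I - h \<longrightarrow> N_dagger I S h = 0)
       \<and> (j = I - h \<longrightarrow>
           real (N_dagger I S h) = (1 / fact (j - (I - h))) * (\<Prod>t=1..I - h. real (h - t)))
       \<and> (j > I - h \<longrightarrow>
           real (N_dagger I S h) = (1 / fact (j - (I - h))) * (\<Prod>t=1..I - h. real (h - t))
              * (\<Prod>t=1..j - (I - h). real ((2 * h - I - 1 - 2 * (t - 1)) choose 2))))
    \<and> (\<forall>h. 1 \<le> h \<and> h \<le> S \<longrightarrow> N_dagger I S h = 0)"
proof -
  note zero = N_dagger_eq_0[OF _ _ assms(1,3)]
  note shifted = N_dagger_formula_shifted[OF _ _ assms(1,3)]
  show ?thesis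
  proof (intro conjI allI impI)
    fix h assume "S + 1 \<le> h \<and> h \<le> I - 2"
    then have h: "1 \<le> h" "h \<le> I" by auto
    show "N_dagger I S h = 0" if "j < I - h"
      using zero[OF h that] .
    show "real (N_dagger I S h) = (1 / fact (j - (I - h))) * (\<Prod>t=1..I - h. real (h - t))"
      if "j = I - h"
      using shifted[OF h] that by simp
    show "real (N_dagger I S h) = (1 / fact (j - (I - h))) * (\<Prod>t=1..I - h. real (h - t))
        * (\<Prod>t=1..j - (I - h). real ((2 * h - I - 1 - 2 * (t - 1)) choose 2))" if "j > I - h"
      using shifted[OF h] that by simp
  next
    fix h assume "1 \<le> h \<and> h \<le> S"
    then show "N_dagger I S h = 0"
      using assms(1,3) by (intro zero) linarith+
  qed (use N_dagger_last[OF assms(1,3)] N_dagger_second_last[OF assms(1,3)] assms(4) in simp_all)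
qed

end
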